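(* Let $(G,\cdot)$ be a group satisfying the descending chain condition on subgroups and the ascending chain condition on normal subgroups (e.g. $G$ finite). Let $\epsilon\in\{1,-1\}$ and $\psi\in\operatorname{End}(G,\cdot)$ with either $\epsilon=-1$ and $\psi([[G,\psi],G])\le Z(G,\cdot)$, or $\epsilon=1$ and $\psi([\psi(G),G])\le Z(G,\cdot)$. Let $g\circ h=g\cdot\psi(g)^{\epsilon}\cdot h\cdot\psi(g)^{-\epsilon}$, let $\nu(g)\in\operatorname{Perm}(G)$ be $h\mapsto g\circ h$, and $N=\{\nu(g):g\in G\}$. Then there is a natural number $n$ such that: (1) $J=\ker(\psi^n)$ is a normal subgroup of both $(G,\cdot)$ and $(G,\circ)$; (2) $I=\psi^n(G)$ is a subgroup of both $(G,\cdot)$ and $(G,\circ)$; (3) $\psi$ restricts to a nilpotent endomorphism of $J$; (4) $\psi$ restricts to an automorphism of $I$; (5) both $(G,\cdot)$ and $(G,\circ)$ are semidirect products of $J$ by $I$; (6) $N$ is the semidirect product of its normal subgroup $\nu(J)$ by $\nu(I)$.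
   Context: $\operatorname{Perm}(G)$ is the group of permutations of the set $G$. For $\psi\in\operatorname{End}(G,\cdot)$, $[g,\psi]=g\cdot\psi(g)^{-1}$ and $[G,\psi]$ is the subgroup generated by these elements. Commutators are $[x,y]=xyx^{-1}y^{-1}$ and $[A,B]$ is the subgroup generated by $[a,b]$, $a\in A$, $b\in B$. $Z(G,\cdot)$ is the centre. $\psi^n$ is the $n$-fold composite of $\psi$; an endomorphism is nilpotent if some power of it is trivial. *)

theory Defs
  imports "HOL-Algebra.Algebra"
begin

definition grp_center :: "('a, 'b) monoid_scheme \<Rightarrow> 'a set" where
  "grp_center G = {z \<in> carrier G. \<forall>x \<in> carrier G. z \<otimes>\<^bsub>G\<^esub> x = x \<otimes>\<^bsub>G\<^esub> z}"

definition comm_subgroup :: "('a, 'b) monoid_scheme \<Rightarrow> 'a set \<Rightarrow> 'a set \<Rightarrow> 'a set" where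
  "comm_subgroup G A B = generate G
     {x \<otimes>\<^bsub>G\<^esub> y \<otimes>\<^bsub>G\<^esub> inv\<^bsub>G\<^esub> x \<otimes>\<^bsub>G\<^esub> inv\<^bsub>G\<^esub> y | x y. x \<in> A \<and> y \<in> B}"

definition psi_comm :: "('a, 'b) monoid_scheme \<Rightarrow> ('a \<Rightarrow> 'a) \<Rightarrow> 'a set" where
  "psi_comm G \<psi> = generate G {g \<otimes>\<^bsub>G\<^esub> inv\<^bsub>G\<^esub> (\<psi> g) | g. g \<in> carrier G}"

definition dcc_subgroups :: "('a, 'b) monoid_scheme \<Rightarrow> bool" where
  "dcc_subgroups G \<longleftrightarrow> (\<forall>f :: nat \<Rightarrow> 'a set.
     (\<forall>i. subgroup (f i) G) \<and> (\<forall>i. f (Suc i) \<subseteq> f i) \<longrightarrow> (\<exists>m. \<forall>k\<ge>m. f k = f m))"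

definition acc_normal_subgroups :: "('a, 'b) monoid_scheme \<Rightarrow> bool" where
  "acc_normal_subgroups G \<longleftrightarrow> (\<forall>f :: nat \<Rightarrow> 'a set.
     (\<forall>i. f i \<lhd> G) \<and> (\<forall>i. f i \<subseteq> f (Suc i)) \<longrightarrow> (\<exists>m. \<forall>k\<ge>m. f k = f m))"

definition circ_op :: "('a, 'b) monoid_scheme \<Rightarrow> ('a \<Rightarrow> 'a) \<Rightarrow> int \<Rightarrow> 'a \<Rightarrow> 'a \<Rightarrow> 'a" where
  "circ_op G \<psi> \<epsilon> g h = g \<otimes>\<^bsub>G\<^esub> (\<psi> g [^]\<^bsub>G\<^esub> \<epsilon>) \<otimes>\<^bsub>G\<^esub> h \<otimes>\<^bsub>G\<^esub> (\<psi> g [^]\<^bsub>G\<^esub> (- \<epsilon>))"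

definition circ_group :: "('a, 'b) monoid_scheme \<Rightarrow> ('a \<Rightarrow> 'a) \<Rightarrow> int \<Rightarrow> 'a monoid" where
  "circ_group G \<psi> \<epsilon> = \<lparr>carrier = carrier G, monoid.mult = circ_op G \<psi> \<epsilon>, one = \<one>\<^bsub>G\<^esub>\<rparr>"

definition nu :: "('a, 'b) monoid_scheme \<Rightarrow> ('a \<Rightarrow> 'a) \<Rightarrow> int \<Rightarrow> 'a \<Rightarrow> ('a \<Rightarrow> 'a)" where
  "nu G \<psi> \<epsilon> g = (\<lambda>h \<in> carrier G. circ_op G \<psi> \<epsilon> g h)"

definition nu_group :: "('a, 'b) monoid_scheme \<Rightarrow> ('a \<Rightarrow> 'a) \<Rightarrow> int \<Rightarrow> ('a \<Rightarrow> 'a) monoid" where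
  "nu_group G \<psi> \<epsilon> = (BijGroup (carrier G))\<lparr>carrier := nu G \<psi> \<epsilon> ` carrier G\<rparr>"

definition semidirect_of :: "('a, 'b) monoid_scheme \<Rightarrow> 'a set \<Rightarrow> 'a set \<Rightarrow> bool" where
  "semidirect_of H J I \<longleftrightarrow> J \<lhd> H \<and> subgroup I H \<and> J \<inter> I = {\<one>\<^bsub>H\<^esub>} \<and> J <#>\<^bsub>H\<^esub> I = carrier H"

end

theory Submission
  imports Defs
begin

text \<open>Fitting's lemma: the chain conditions make the images and the kernels of the powers
  of \<open>\<psi>\<close> stabilise, say from \<open>n\<close> on, and then \<open>G\<close> splits as \<open>ker \<psi>\<^sup>n \<rtimes> \<psi>\<^sup>n(G)\<close>, with \<open>\<psi>\<close>
  nilpotent on the kernel and bijective on the image. Only the group structure enters, so the same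
  applies to \<open>(G,\<circ>)\<close>, which has the same identity and on which \<open>\<psi>\<close> is again an endomorphism.
  That \<open>\<circ>\<close> is associative rests on one observation: the map \<open>g \<mapsto> g \<psi>(g)\<^sup>\<epsilon>\<close> turns \<open>\<circ>\<close> into
  the product of \<open>G\<close> up to an element of \<open>\<psi>([\<psi>(G),G])\<close> resp. \<open>\<psi>([[G,\<psi>],G])\<close>, which is central
  by hypothesis. Finally \<open>\<nu>\<close> is an isomorphism from \<open>(G,\<circ>)\<close> onto \<open>N\<close>, which carries the
  decomposition over to \<open>N\<close>.\<close>

lemma funpow_hom:
  assumes "f \<in> hom G G"
  shows "f ^^ n \<in> hom G G"
proof (induction n)
  case (Suc n)
  then show ?case unfolding funpow.simps(2) by (rule hom_compose[OF _ assms])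
qed (auto intro: homI)

lemma semidirect_of_iso_image:
  assumes A: "group A" and B: "group B" and f: "f \<in> hom A B"
    and bij: "bij_betw f (carrier A) (carrier B)" and sd: "semidirect_of A J I"
  shows "semidirect_of B (f ` J) (f ` I)"
proof -
  interpret group_hom A B f using A B f by (simp add: group_hom_def group_hom_axioms_def)
  have Jn: "J \<lhd> A" and Is: "subgroup I A" and JI: "J \<inter> I = {\<one>\<^bsub>A\<^esub>}"
    and JIc: "J <#>\<^bsub>A\<^esub> I = carrier A" using sd by (auto simp: semidirect_of_def)
  have Js: "subgroup J A" using Jn by (simp add: normal_imp_subgroup)
  have Jc: "J \<subseteq> carrier A" and Ic: "I \<subseteq> carrier A" using Js Is by (auto dest: subgroup.subset)
  have inj: "inj_on f (carrier A)" and surj: "f ` carrier A = carrier B"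
    using bij by (auto simp: bij_betw_def)
  have "f ` J \<lhd> B"
    unfolding group.normal_inv_iff[OF B]
  proof (intro conjI ballI)
    show "subgroup (f ` J) B" using subgroup_img_is_subgroup[OF Js] .
    fix x h assume x: "x \<in> carrier B" and h: "h \<in> f ` J"
    obtain a where a: "a \<in> carrier A" "x = f a" using x surj by auto
    obtain j where j: "j \<in> J" "h = f j" using h by auto
    have "a \<otimes>\<^bsub>A\<^esub> j \<otimes>\<^bsub>A\<^esub> inv\<^bsub>A\<^esub> a \<in> J"
      using Jn a j unfolding group.normal_inv_iff[OF A] by auto
    moreover have "f (a \<otimes>\<^bsub>A\<^esub> j \<otimes>\<^bsub>A\<^esub> inv\<^bsub>A\<^esub> a) = x \<otimes>\<^bsub>B\<^esub> h \<otimes>\<^bsub>B\<^esub> inv\<^bsub>B\<^esub> x"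
      using a j Jc by auto
    ultimately show "x \<otimes>\<^bsub>B\<^esub> h \<otimes>\<^bsub>B\<^esub> inv\<^bsub>B\<^esub> x \<in> f ` J" by (metis image_eqI)
  qed
  moreover have "subgroup (f ` I) B" using subgroup_img_is_subgroup[OF Is] .
  moreover have "f ` J \<inter> f ` I = {\<one>\<^bsub>B\<^esub>}"
    using JI inj Jc Ic by (simp add: inj_on_image_Int[symmetric])
  moreover have "f ` J <#>\<^bsub>B\<^esub> f ` I = f ` (J <#>\<^bsub>A\<^esub> I)"
    unfolding set_mult_def using Jc Ic
    by (auto simp: hom_mult[symmetric] simp del: hom_mult) (force+)
  ultimately show ?thesis using JIc surj by (simp add: semidirect_of_def)
qed

context group
begin

lemma funpow_images_kernels_stabilize:
  assumes f: "f \<in> hom G G" and "dcc_subgroups G" and "acc_normal_subgroups G"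
  obtains n where "\<And>k. n \<le> k \<Longrightarrow> (f ^^ k) ` carrier G = (f ^^ n) ` carrier G"
    and "\<And>k. n \<le> k \<Longrightarrow> kernel G G (f ^^ k) = kernel G G (f ^^ n)"
proof -
  have gh: "group_hom G G (f ^^ i)" for i
    by (simp add: group_hom_def group_hom_axioms_def funpow_hom[OF f] is_group)
  have "(f ^^ Suc i) ` carrier G \<subseteq> (f ^^ i) ` carrier G" for i
    using hom_in_carrier[OF f] by (auto simp: funpow_swap1)
  then obtain m1 where m1: "\<And>k. m1 \<le> k \<Longrightarrow> (f ^^ k) ` carrier G = (f ^^ m1) ` carrier G"
    using \<open>dcc_subgroups G\<close>[unfolded dcc_subgroups_def, THEN spec, of "\<lambda>i. (f ^^ i) ` carrier G"]
      group_hom.img_is_subgroup[OF gh]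
    by auto
  have "kernel G G (f ^^ i) \<subseteq> kernel G G (f ^^ Suc i)" for i
    by (auto simp: kernel_def hom_one[OF f is_group is_group])
  then obtain m2 where m2: "\<And>k. m2 \<le> k \<Longrightarrow> kernel G G (f ^^ k) = kernel G G (f ^^ m2)"
    using \<open>acc_normal_subgroups G\<close>[unfolded acc_normal_subgroups_def, THEN spec,
        of "\<lambda>i. kernel G G (f ^^ i)"]
      group_hom.normal_kernel[OF gh]
    by auto
  show ?thesis
  proof (rule that)
    fix k assume "max m1 m2 \<le> k"
    then show "(f ^^ k) ` carrier G = (f ^^ max m1 m2) ` carrier G"
      and "kernel G G (f ^^ k) = kernel G G (f ^^ max m1 m2)"
      using m1[of k] m1[of "max m1 m2"] m2[of k] m2[of "max m1 m2"] by simp_all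
  qed
qed

lemma semidirect_of_kernel_image:
  assumes g: "g \<in> hom G G"
    and ker: "kernel G G (g \<circ> g) = kernel G G g" and img: "(g \<circ> g) ` carrier G = g ` carrier G"
  shows "semidirect_of G (kernel G G g) (g ` carrier G)"
proof -
  interpret group_hom G G g by (simp add: group_hom_def group_hom_axioms_def g is_group)
  have "kernel G G g \<inter> g ` carrier G \<subseteq> {\<one>}"
  proof
    fix x assume "x \<in> kernel G G g \<inter> g ` carrier G"
    then obtain y where y: "y \<in> carrier G" "x = g y" "g (g y) = \<one>"
      by (auto simp: kernel_def)
    then have "y \<in> kernel G G g" using ker by (auto simp: kernel_def)
    then show "x \<in> {\<one>}" using y by (simp add: kernel_def)
  qed
  moreover have "carrier G \<subseteq> kernel G G g <#> g ` carrier G"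
  proof
    fix x assume x: "x \<in> carrier G"
    then obtain y where y: "y \<in> carrier G" "g x = g (g y)"
      using img by (metis comp_apply image_eqI image_iff)
    have "g (x \<otimes> inv (g y)) = \<one>" using x y by simp
    then have "x \<otimes> inv (g y) \<in> kernel G G g" using x y by (simp add: kernel_def)
    moreover have "x = (x \<otimes> inv (g y)) \<otimes> g y" using x y by (simp add: m_assoc)
    ultimately show "x \<in> kernel G G g <#> g ` carrier G"
      using y by (auto simp: set_mult_def)
  qed
  moreover have "kernel G G g <#> g ` carrier G \<subseteq> carrier G"
    by (auto simp: set_mult_def kernel_def)
  moreover have "\<one> \<in> kernel G G g \<inter> g ` carrier G"
    using subgroup.one_closed[OF img_is_subgroup] by (simp add: kernel_def)
  ultimately show ?thesis
    unfolding semidirect_of_def by (intro conjI normal_kernel img_is_subgroup equalityI) auto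
qed

lemma hom_restrict_kernel_funpow:
  assumes f: "f \<in> hom G G"
  shows "f \<in> hom (G\<lparr>carrier := kernel G G (f ^^ n)\<rparr>) (G\<lparr>carrier := kernel G G (f ^^ n)\<rparr>)"
  using hom_in_carrier[OF f] hom_mult[OF f] hom_one[OF f is_group is_group]
  by (intro homI) (auto simp: kernel_def simp flip: funpow_swap1)

lemma iso_restrict_image_funpow:
  assumes f: "f \<in> hom G G"
    and ker: "kernel G G (f ^^ Suc n) = kernel G G (f ^^ n)"
    and img: "(f ^^ Suc n) ` carrier G = (f ^^ n) ` carrier G"
  defines "I \<equiv> (f ^^ n) ` carrier G"
  shows "f \<in> iso (G\<lparr>carrier := I\<rparr>) (G\<lparr>carrier := I\<rparr>)"
proof -
  interpret f: group_hom G G f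
    by (simp add: group_hom_def group_hom_axioms_def f is_group)
  interpret fn: group_hom G G "f ^^ n"
    by (simp add: group_hom_def group_hom_axioms_def funpow_hom[OF f] is_group)
  have I: "subgroup I G" unfolding I_def by (rule fn.img_is_subgroup)
  have fI: "f ` I = I" using img by (simp add: I_def image_comp funpow_swap1)
  have "inj_on f I"
  proof (rule inj_onI)
    fix a b assume a: "a \<in> I" and b: "b \<in> I" and e: "f a = f b"
    have ab: "a \<in> carrier G" "b \<in> carrier G" using a b subgroup.subset[OF I] by auto
    have "a \<otimes> inv b \<in> I" using a b I by (simp add: subgroup.m_closed subgroup.m_inv_closed)
    then obtain w where w: "w \<in> carrier G" "a \<otimes> inv b = (f ^^ n) w" by (auto simp: I_def)
    have "(f ^^ Suc n) w = f (a \<otimes> inv b)" using w by simp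
    also have "\<dots> = \<one>" using ab e by simp
    finally have "w \<in> kernel G G (f ^^ n)" using w ker by (auto simp: kernel_def)
    then have "a \<otimes> inv b = \<one>" using w by (simp add: kernel_def)
    then show "a = b" using ab by (metis inv_equality inv_inv inv_closed)
  qed
  moreover have "f \<in> hom (G\<lparr>carrier := I\<rparr>) (G\<lparr>carrier := I\<rparr>)"
    using fI subgroup.subset[OF I] by (intro homI) (auto simp: subset_iff)
  ultimately show ?thesis using fI by (simp add: iso_def bij_betw_def)
qed

end

lemma (in group) mult_inv_cancel_left [simp]: "x \<in> carrier G \<Longrightarrow> y \<in> carrier G \<Longrightarrow> x \<otimes> (inv x \<otimes> y) = y"
  by (simp flip: m_assoc)

lemma (in group) inv_mult_cancel_left [simp]: "x \<in> carrier G \<Longrightarrow> y \<in> carrier G \<Longrightarrow> inv x \<otimes> (x \<otimes> y) = y"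
  by (simp flip: m_assoc)

locale circle_setup = group G for G :: "('a, 'b) monoid_scheme" (structure) +
  fixes \<psi> :: "'a \<Rightarrow> 'a" and \<epsilon> :: int
  assumes psi_hom: "\<psi> \<in> hom G G"
    and center_condition:
      "(\<epsilon> = -1 \<and> \<psi> ` comm_subgroup G (psi_comm G \<psi>) (carrier G) \<subseteq> grp_center G)
     \<or> (\<epsilon> = 1 \<and> \<psi> ` comm_subgroup G (\<psi> ` carrier G) (carrier G) \<subseteq> grp_center G)"
begin

sublocale psi: group_hom G G \<psi>
  by (simp add: group_hom_def group_hom_axioms_def psi_hom is_group)

abbreviation C where "C \<equiv> circ_group G \<psi> \<epsilon>"
abbreviation circ (infixl "\<circ>\<circ>" 70) where "circ \<equiv> circ_op G \<psi> \<epsilon>"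
abbreviation \<nu> where "\<nu> \<equiv> nu G \<psi> \<epsilon>"

definition twist :: "'a \<Rightarrow> 'a" where "twist g = \<psi> g [^] \<epsilon>"

lemma twist_closed [simp]: "g \<in> carrier G \<Longrightarrow> twist g \<in> carrier G"
  by (simp add: twist_def)

lemma twist_eq_psi: "\<epsilon> = 1 \<Longrightarrow> g \<in> carrier G \<Longrightarrow> twist g = \<psi> g"
  unfolding twist_def by simp

lemma twist_eq_inv_psi: "\<epsilon> = -1 \<Longrightarrow> g \<in> carrier G \<Longrightarrow> twist g = inv (\<psi> g)"
  unfolding twist_def by (simp add: int_pow_neg)

lemma psi_twist: "g \<in> carrier G \<Longrightarrow> \<psi> (twist g) = twist (\<psi> g)"
  by (simp add: twist_def psi.hom_int_pow)

lemma circ_eq: "g \<in> carrier G \<Longrightarrow> g \<circ>\<circ> h = g \<otimes> twist g \<otimes> h \<otimes> inv (twist g)"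
  by (simp add: circ_op_def twist_def int_pow_neg)

lemma circ_closed [simp]: "x \<in> carrier G \<Longrightarrow> y \<in> carrier G \<Longrightarrow> x \<circ>\<circ> y \<in> carrier G"
  by (simp add: circ_eq)

lemma circ_group_carrier [simp]: "carrier C = carrier G"
  and circ_group_one [simp]: "\<one>\<^bsub>C\<^esub> = \<one>"
  and circ_group_mult [simp]: "x \<otimes>\<^bsub>C\<^esub> y = x \<circ>\<circ> y"
  by (simp_all add: circ_group_def)

lemma twisted_product_defect_central:
  assumes g: "g \<in> carrier G" and h: "h \<in> carrier G"
  shows "inv ((g \<circ>\<circ> h) \<otimes> twist (g \<circ>\<circ> h)) \<otimes> (g \<otimes> twist g \<otimes> h \<otimes> twist h) \<in> grp_center G"
  using center_condition
proof
  assume "\<epsilon> = -1 \<and> \<psi> ` comm_subgroup G (psi_comm G \<psi>) (carrier G) \<subseteq> grp_center G"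
  then have e: "\<epsilon> = -1" and Z: "\<psi> ` comm_subgroup G (psi_comm G \<psi>) (carrier G) \<subseteq> grp_center G"
    by auto
  define u where "u = g \<otimes> inv (\<psi> g)"
  have "u \<in> psi_comm G \<psi>" unfolding psi_comm_def u_def using g by (intro generate.incl) blast
  then have "u \<otimes> h \<otimes> inv u \<otimes> inv h \<in> comm_subgroup G (psi_comm G \<psi>) (carrier G)"
    unfolding comm_subgroup_def using h by (intro generate.incl) blast
  moreover have "inv ((g \<circ>\<circ> h) \<otimes> twist (g \<circ>\<circ> h)) \<otimes> (g \<otimes> twist g \<otimes> h \<otimes> twist h)
      = \<psi> (u \<otimes> h \<otimes> inv u \<otimes> inv h)"
    using g h by (simp add: circ_eq twist_eq_inv_psi[OF e] u_def m_assoc inv_mult_group)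
  ultimately show ?thesis using Z by auto
next
  assume "\<epsilon> = 1 \<and> \<psi> ` comm_subgroup G (\<psi> ` carrier G) (carrier G) \<subseteq> grp_center G"
  then have e: "\<epsilon> = 1" and Z: "\<psi> ` comm_subgroup G (\<psi> ` carrier G) (carrier G) \<subseteq> grp_center G"
    by auto
  have "\<psi> g \<otimes> inv h \<otimes> inv (\<psi> g) \<otimes> inv (inv h) \<in> comm_subgroup G (\<psi> ` carrier G) (carrier G)"
    unfolding comm_subgroup_def using g h by (intro generate.incl) blast
  moreover have "inv ((g \<circ>\<circ> h) \<otimes> twist (g \<circ>\<circ> h)) \<otimes> (g \<otimes> twist g \<otimes> h \<otimes> twist h)
      = \<psi> (\<psi> g \<otimes> inv h \<otimes> inv (\<psi> g) \<otimes> inv (inv h))"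
    using g h by (simp add: circ_eq twist_eq_psi[OF e] m_assoc inv_mult_group)
  ultimately show ?thesis using Z by auto
qed

lemma circ_assoc:
  assumes g: "g \<in> carrier G" and h: "h \<in> carrier G" and k: "k \<in> carrier G"
  shows "(g \<circ>\<circ> h) \<circ>\<circ> k = g \<circ>\<circ> (h \<circ>\<circ> k)"
proof -
  define x where "x = g \<circ>\<circ> h"
  define a where "a = g \<otimes> twist g \<otimes> h \<otimes> twist h"
  define b where "b = x \<otimes> twist x"
  define z where "z = inv b \<otimes> a"
  have x: "x \<in> carrier G" and a: "a \<in> carrier G" and b: "b \<in> carrier G"
    using g h by (simp_all add: x_def a_def b_def)
  have "z \<in> grp_center G"
    using twisted_product_defect_central[OF g h] by (simp add: z_def x_def a_def b_def)
  then have z: "z \<in> carrier G" and zk: "z \<otimes> k = k \<otimes> z" using k by (auto simp: grp_center_def)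
  have az: "a = b \<otimes> z" using a b by (simp add: z_def flip: m_assoc)
  have "x \<circ>\<circ> k = b \<otimes> k \<otimes> inv b \<otimes> x"
    using x k by (simp add: circ_eq b_def m_assoc inv_mult_group)
  also have "\<dots> = b \<otimes> (z \<otimes> k) \<otimes> inv z \<otimes> inv b \<otimes> x"
    using zk b z k x by (simp add: m_assoc)
  also have "\<dots> = a \<otimes> k \<otimes> inv a \<otimes> x"
    using az b z k x by (simp add: m_assoc inv_mult_group)
  also have "\<dots> = g \<circ>\<circ> (h \<circ>\<circ> k)"
    using g h k by (simp add: circ_eq a_def x_def m_assoc inv_mult_group)
  finally show ?thesis by (simp add: x_def)
qed

definition circ_inv :: "'a \<Rightarrow> 'a" where "circ_inv g = inv (twist g) \<otimes> inv g \<otimes> twist g"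

lemma circ_inv_closed [simp]: "g \<in> carrier G \<Longrightarrow> circ_inv g \<in> carrier G"
  by (simp add: circ_inv_def)

lemma circ_one_left [simp]: "x \<in> carrier G \<Longrightarrow> \<one> \<circ>\<circ> x = x"
  by (simp add: circ_eq twist_def)

lemma circ_inv_right [simp]: "g \<in> carrier G \<Longrightarrow> g \<circ>\<circ> circ_inv g = \<one>"
  by (simp add: circ_eq circ_inv_def m_assoc)

lemma circ_one_right [simp]: "x \<in> carrier G \<Longrightarrow> x \<circ>\<circ> \<one> = x"
  by (simp add: circ_eq m_assoc)

lemma circ_inv_left [simp]:
  assumes g: "g \<in> carrier G"
  shows "circ_inv g \<circ>\<circ> g = \<one>"
proof -
  let ?h = "circ_inv g"
  have h: "?h \<in> carrier G" "circ_inv ?h \<in> carrier G" using g by auto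
  have "?h \<circ>\<circ> g = (?h \<circ>\<circ> g) \<circ>\<circ> (?h \<circ>\<circ> circ_inv ?h)"
    using g h by simp
  also have "\<dots> = ?h \<circ>\<circ> ((g \<circ>\<circ> ?h) \<circ>\<circ> circ_inv ?h)"
    using g h by (simp only: circ_assoc circ_closed)
  also have "\<dots> = \<one>" using g h by simp
  finally show ?thesis .
qed

lemma circ_group_is_group: "group C"
proof (rule groupI)
  fix x assume "x \<in> carrier C"
  then show "\<exists>y\<in>carrier C. y \<otimes>\<^bsub>C\<^esub> x = \<one>\<^bsub>C\<^esub>" by (intro bexI[of _ "circ_inv x"]) auto
qed (auto simp: circ_assoc)

lemma psi_hom_circ_group: "\<psi> \<in> hom C C"
  by (intro homI) (auto simp: circ_eq psi_twist)

lemma kernel_circ_group [simp]: "kernel C C f = kernel G G f"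
  by (simp add: kernel_def)

lemma nu_Bij:
  assumes g: "g \<in> carrier G"
  shows "\<nu> g \<in> Bij (carrier G)"
proof -
  have "bij_betw (\<nu> g) (carrier G) (carrier G)"
    by (rule bij_betw_byWitness[where f'="\<nu> (circ_inv g)"])
       (use g in \<open>auto simp: nu_def simp flip: circ_assoc\<close>)
  then show ?thesis by (simp add: Bij_def nu_def)
qed

lemma nu_mult:
  "a \<in> carrier G \<Longrightarrow> b \<in> carrier G \<Longrightarrow> \<nu> a \<otimes>\<^bsub>BijGroup (carrier G)\<^esub> \<nu> b = \<nu> (a \<circ>\<circ> b)"
  using nu_Bij[of a] nu_Bij[of b]
  by (auto simp: BijGroup_def compose_def nu_def circ_assoc intro!: ext)

lemma nu_subgroup: "subgroup (\<nu> ` carrier G) (BijGroup (carrier G))"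
proof -
  have "\<nu> \<in> hom C (BijGroup (carrier G))"
    using nu_Bij by (intro homI) (auto simp: BijGroup_def nu_mult[symmetric])
  then have "group_hom C (BijGroup (carrier G)) \<nu>"
    using circ_group_is_group group_BijGroup by (simp add: group_hom_def group_hom_axioms_def)
  then show ?thesis using group_hom.img_is_subgroup by fastforce
qed

lemma nu_group_is_group: "group (nu_group G \<psi> \<epsilon>)"
  unfolding nu_group_def using subgroup.subgroup_is_group[OF nu_subgroup group_BijGroup] .

lemma nu_hom: "\<nu> \<in> hom C (nu_group G \<psi> \<epsilon>)"
  by (intro homI) (auto simp: nu_group_def nu_mult[symmetric])

lemma nu_bij: "bij_betw \<nu> (carrier C) (carrier (nu_group G \<psi> \<epsilon>))"
proof -
  have "inj_on \<nu> (carrier G)"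
  proof (rule inj_onI)
    fix a b assume "a \<in> carrier G" "b \<in> carrier G" "\<nu> a = \<nu> b"
    then have "\<nu> a \<one> = \<nu> b \<one>" by simp
    then show "a = b" using \<open>a \<in> carrier G\<close> \<open>b \<in> carrier G\<close> by (simp add: nu_def)
  qed
  then show ?thesis by (simp add: bij_betw_def nu_group_def)
qed

end

theorem mainTheorem5:
  fixes G :: "('a, 'b) monoid_scheme" and \<psi> :: "'a \<Rightarrow> 'a" and \<epsilon> :: int
  assumes "group G"
    and "dcc_subgroups G" and "acc_normal_subgroups G"
    and "\<psi> \<in> hom G G"
    and "(\<epsilon> = -1 \<and> \<psi> ` comm_subgroup G (psi_comm G \<psi>) (carrier G) \<subseteq> grp_center G)
       \<or> (\<epsilon> = 1 \<and> \<psi> ` comm_subgroup G (\<psi> ` carrier G) (carrier G) \<subseteq> grp_center G)"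
  shows "\<exists>n::nat.
    (let J = kernel G G (\<psi> ^^ n); I = (\<psi> ^^ n) ` carrier G; C = circ_group G \<psi> \<epsilon> in
      J \<lhd> G \<and> J \<lhd> C
    \<and> subgroup I G \<and> subgroup I C
    \<and> \<psi> \<in> hom (G\<lparr>carrier := J\<rparr>) (G\<lparr>carrier := J\<rparr>) \<and> (\<exists>m. \<forall>x\<in>J. (\<psi> ^^ m) x = \<one>\<^bsub>G\<^esub>)
    \<and> \<psi> \<in> iso (G\<lparr>carrier := I\<rparr>) (G\<lparr>carrier := I\<rparr>)
    \<and> semidirect_of G J I \<and> semidirect_of C J I
    \<and> semidirect_of (nu_group G \<psi> \<epsilon>) (nu G \<psi> \<epsilon> ` J) (nu G \<psi> \<epsilon> ` I))"
proof -
  interpret circle_setup G \<psi> \<epsilon> using assms by (simp add: circle_setup_def circle_setup_axioms_def)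
  interpret C: group C by (rule circ_group_is_group)
  obtain n where img: "\<And>k. n \<le> k \<Longrightarrow> (\<psi> ^^ k) ` carrier G = (\<psi> ^^ n) ` carrier G"
    and ker: "\<And>k. n \<le> k \<Longrightarrow> kernel G G (\<psi> ^^ k) = kernel G G (\<psi> ^^ n)"
    using funpow_images_kernels_stabilize[OF psi_hom assms(2,3)] by blast
  define J where "J = kernel G G (\<psi> ^^ n)"
  define I where "I = (\<psi> ^^ n) ` carrier G"
  have sdG: "semidirect_of G J I"
    using semidirect_of_kernel_image[OF funpow_hom[OF psi_hom]] img[of "n + n"] ker[of "n + n"]
    by (simp add: J_def I_def funpow_add)
  have sdC: "semidirect_of C J I"
    using C.semidirect_of_kernel_image[OF funpow_hom[OF psi_hom_circ_group]] img[of "n + n"] ker[of "n + n"]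
    by (simp add: J_def I_def funpow_add)
  have sdN: "semidirect_of (nu_group G \<psi> \<epsilon>) (\<nu> ` J) (\<nu> ` I)"
    by (rule semidirect_of_iso_image[OF circ_group_is_group nu_group_is_group nu_hom nu_bij sdC])
  have "\<psi> \<in> iso (G\<lparr>carrier := I\<rparr>) (G\<lparr>carrier := I\<rparr>)"
    unfolding I_def by (rule iso_restrict_image_funpow[OF psi_hom ker img]) simp_all
  moreover have "\<forall>x\<in>J. (\<psi> ^^ n) x = \<one>\<^bsub>G\<^esub>" by (simp add: J_def kernel_def)
  ultimately show ?thesis
    using sdG sdC sdN hom_restrict_kernel_funpow[OF psi_hom, of n]
    by (intro exI[of _ n]) (auto simp: Let_def semidirect_of_def J_def[symmetric] I_def[symmetric])
qed

end
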